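(* Let $Q$ be a finite Moufang loop, $S\le Q$, and $x,y\in Q$ with $xS\cap yS\neq\emptyset$. Let $f_{x,y}:xS\cap yS\to xS\cap yS$ be the permutation $xs\mapsto ys$. Let $xs=yr\in xS\cap yS$ with $s,r\in S$. Then $xs$ belongs to a cycle of $f_{x,y}$ whose length is the order $|sr^{-1}|$ of the element $sr^{-1}\in S$. In particular, if $S\neq 1$, then $|xS\cap yS|$ can be written as a sum of orders of some (possibly repeated) nonidentity elements of $S$.
   Context: A Moufang loop is a loop satisfying $((xy)x)z=x(y(xz))$ (equivalently $((xy)z)y=x(y(zy))$, etc.); Moufang loops have two-sided inverses $x^{-1}$ and are right Bol, which guarantees that $f_{x,y}$ is a well-defined permutation of $xS\cap yS$. Here $xS=\{xs:s\in S\}$. *)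

theory Defs
  imports Main
begin

definition loop :: "'a set \<Rightarrow> ('a \<Rightarrow> 'a \<Rightarrow> 'a) \<Rightarrow> 'a \<Rightarrow> bool" where
  "loop Q mult e \<longleftrightarrow>
     e \<in> Q \<and>
     (\<forall>a\<in>Q. \<forall>b\<in>Q. mult a b \<in> Q) \<and>
     (\<forall>a\<in>Q. mult e a = a \<and> mult a e = a) \<and>
     (\<forall>a\<in>Q. \<forall>b\<in>Q. \<exists>!x. x \<in> Q \<and> mult a x = b) \<and>
     (\<forall>a\<in>Q. \<forall>b\<in>Q. \<exists>!y. y \<in> Q \<and> mult y a = b)"

definition moufang_loop :: "'a set \<Rightarrow> ('a \<Rightarrow> 'a \<Rightarrow> 'a) \<Rightarrow> 'a \<Rightarrow> bool" where
  "moufang_loop Q mult e \<longleftrightarrow> loop Q mult e \<and>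
     (\<forall>x\<in>Q. \<forall>y\<in>Q. \<forall>z\<in>Q. mult (mult (mult x y) x) z = mult x (mult y (mult x z)))"

definition subloop :: "'a set \<Rightarrow> 'a set \<Rightarrow> ('a \<Rightarrow> 'a \<Rightarrow> 'a) \<Rightarrow> 'a \<Rightarrow> bool" where
  "subloop S Q mult e \<longleftrightarrow> S \<subseteq> Q \<and> loop S mult e"

text \<open>Two-sided inverse (exists in Moufang loops).\<close>
definition loop_inv :: "'a set \<Rightarrow> ('a \<Rightarrow> 'a \<Rightarrow> 'a) \<Rightarrow> 'a \<Rightarrow> 'a \<Rightarrow> 'a" where
  "loop_inv Q mult e x = (THE y. y \<in> Q \<and> mult x y = e \<and> mult y x = e)"

primrec loop_pow :: "('a \<Rightarrow> 'a \<Rightarrow> 'a) \<Rightarrow> 'a \<Rightarrow> 'a \<Rightarrow> nat \<Rightarrow> 'a" where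
  "loop_pow mult e x 0 = e"
| "loop_pow mult e x (Suc n) = mult x (loop_pow mult e x n)"

text \<open>Order of an element (powers are well defined since Moufang loops are power-associative).\<close>
definition loop_order :: "('a \<Rightarrow> 'a \<Rightarrow> 'a) \<Rightarrow> 'a \<Rightarrow> 'a \<Rightarrow> nat" where
  "loop_order mult e x = (LEAST n. 0 < n \<and> loop_pow mult e x n = e)"

definition lcoset :: "('a \<Rightarrow> 'a \<Rightarrow> 'a) \<Rightarrow> 'a \<Rightarrow> 'a set \<Rightarrow> 'a set" where
  "lcoset mult x S = (\<lambda>s. mult x s) ` S"

definition fxy :: "('a \<Rightarrow> 'a \<Rightarrow> 'a) \<Rightarrow> 'a set \<Rightarrow> 'a \<Rightarrow> 'a \<Rightarrow> 'a \<Rightarrow> 'a" where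
  "fxy mult S x y z = mult y (THE s. s \<in> S \<and> mult x s = z)"

definition cycle_length :: "('a \<Rightarrow> 'a) \<Rightarrow> 'a \<Rightarrow> nat" where
  "cycle_length f z = (LEAST n. 0 < n \<and> (f ^^ n) z = z)"

end

theory Submission
  imports Defs
begin

(* If xa = yb with a, b in S, then y = (xa)b\<^sup>-\<^sup>1 and the right Bol identity gives
   ya = x((ab\<^sup>-\<^sup>1)a).  Starting from xs = yr and putting u = sr\<^sup>-\<^sup>1, this shows
   inductively that f\<^sub>x\<^sub>,\<^sub>y(x(u\<^sup>n s)) = x(u\<^sup>n\<^sup>+\<^sup>1 s), so f\<^sub>x\<^sub>,\<^sub>y acts on the orbit
   of xs as left multiplication by u acts on the orbit of s.  By the Moufang identity, left
   multiplication by u\<^sup>n is the n-th iterate of left multiplication by u, so the cycle has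
   length |u|.  Splitting the permutation f\<^sub>x\<^sub>,\<^sub>y of xS \<inter> yS into cycles gives the sum
   formula; for x = y all these cycles are trivial, and one splits |xS| = |S| along the cycles
   of a nonidentity left translation of S instead. *)

lemma bij_betw_funpow_periodic:
  assumes g: "bij_betw g A A" and "finite A" and z: "z \<in> A"
  shows "\<exists>n>0. (g ^^ n) z = z"
proof -
  have "(\<lambda>k. (g ^^ k) z) ` {..card A} \<subseteq> A"
    using bij_betw_apply[OF bij_betw_funpow[OF g] z] by blast
  then have "\<not> inj_on (\<lambda>k. (g ^^ k) z) {..card A}"
    using card_inj_on_le[OF _ _ \<open>finite A\<close>] by fastforce
  then obtain i j where "i < j" and ij: "(g ^^ i) z = (g ^^ j) z"
    unfolding inj_on_def by (metis linorder_neqE_nat)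
  have "(g ^^ i) ((g ^^ (j - i)) z) = (g ^^ (i + (j - i))) z"
    by (simp add: funpow_add)
  also have "\<dots> = (g ^^ i) z" using \<open>i < j\<close> ij by simp
  finally have "(g ^^ i) ((g ^^ (j - i)) z) = (g ^^ i) z" .
  moreover have "(g ^^ (j - i)) z \<in> A"
    using bij_betw_apply[OF bij_betw_funpow[OF g] z] .
  ultimately have "(g ^^ (j - i)) z = z"
    using bij_betw_imp_inj_on[OF bij_betw_funpow[OF g]] z by (auto dest: inj_onD)
  then show ?thesis using \<open>i < j\<close> by (intro exI[of _ "j - i"]) simp
qed

lemma
  assumes "\<exists>n>0. (g ^^ n) z = z"
  shows cycle_length_pos: "0 < cycle_length g z"
    and funpow_cycle_length: "(g ^^ cycle_length g z) z = z"
    and funpow_less_cycle_length: "0 < n \<Longrightarrow> n < cycle_length g z \<Longrightarrow> (g ^^ n) z \<noteq> z"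
  using LeastI_ex[OF assms] not_less_Least[of n "\<lambda>n. 0 < n \<and> (g ^^ n) z = z"]
  unfolding cycle_length_def by auto

definition cycle_of :: "('a \<Rightarrow> 'a) \<Rightarrow> 'a \<Rightarrow> 'a set" where
  "cycle_of g z = (\<lambda>k. (g ^^ k) z) ` {..<cycle_length g z}"

lemma card_cycle_of:
  assumes "\<exists>n>0. (g ^^ n) z = z"
  shows "card (cycle_of g z) = cycle_length g z"
  using inj_on_funpow_least[OF funpow_cycle_length funpow_less_cycle_length, OF assms assms]
  by (simp add: cycle_of_def card_image atLeast0LessThan)

lemma self_in_cycle_of:
  assumes "\<exists>n>0. (g ^^ n) z = z"
  shows "z \<in> cycle_of g z"
  using cycle_length_pos[OF assms] unfolding cycle_of_def by force

lemma image_cycle_of_subset: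
  assumes "\<exists>n>0. (g ^^ n) z = z"
  shows "g ` cycle_of g z \<subseteq> cycle_of g z"
proof
  fix w assume "w \<in> g ` cycle_of g z"
  then obtain k where k: "k < cycle_length g z" "w = (g ^^ Suc k) z"
    unfolding cycle_of_def by auto
  show "w \<in> cycle_of g z"
  proof (cases "Suc k = cycle_length g z")
    case True
    then show ?thesis using k funpow_cycle_length[OF assms] self_in_cycle_of[OF assms] by simp
  next
    case False
    then show ?thesis using k unfolding cycle_of_def by (auto intro!: image_eqI[of _ _ "Suc k"])
  qed
qed

lemma card_eq_sum_cycle_lengths:
  assumes "finite A" and "bij_betw g A A"
  shows "\<exists>zs. set zs \<subseteq> A \<and> card A = (\<Sum>z\<leftarrow>zs. cycle_length g z)"
  using assms
proof (induction A rule: finite_psubset_induct)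
  case (psubset A)
  show ?case
  proof (cases "A = {}")
    case True
    then show ?thesis by (intro exI[of _ "[]"]) simp
  next
    case False
    then obtain z where z: "z \<in> A" by blast
    let ?C = "cycle_of g z"
    have per: "\<exists>n>0. (g ^^ n) z = z"
      using bij_betw_funpow_periodic[OF psubset.prems psubset.hyps(1) z] .
    have CA: "?C \<subseteq> A"
      using bij_betw_apply[OF bij_betw_funpow[OF psubset.prems] z] unfolding cycle_of_def by blast
    have "finite ?C" unfolding cycle_of_def by simp
    moreover have "inj_on g ?C"
      using bij_betw_imp_inj_on[OF psubset.prems] CA by (rule inj_on_subset)
    ultimately have "bij_betw g ?C ?C"
      using endo_inj_surj image_cycle_of_subset[OF per] by (simp add: bij_betw_def)
    then have "bij_betw g (A - ?C) (A - ?C)"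
      using bij_betw_DiffI[OF psubset.prems] CA by blast
    moreover have "A - ?C \<subset> A" using self_in_cycle_of[OF per] z by blast
    ultimately obtain zs where zs: "set zs \<subseteq> A - ?C"
        "card (A - ?C) = (\<Sum>z\<leftarrow>zs. cycle_length g z)"
      using psubset.IH by blast
    have "card A = card ?C + card (A - ?C)"
      using card_Diff_subset[OF finite_subset[OF CA psubset.hyps(1)] CA]
        card_mono[OF psubset.hyps(1) CA] by simp
    then have "card A = (\<Sum>z\<leftarrow>z # zs. cycle_length g z)"
      using zs(2) card_cycle_of[OF per] by simp
    then show ?thesis using zs(1) z by (intro exI[of _ "z # zs"]) auto
  qed
qed

lemma card_eq_sum_list_of_cycle_lengths:
  assumes "finite A" and "bij_betw g A A"
    and "\<And>z. z \<in> A \<Longrightarrow> \<exists>t\<in>T. cycle_length g z = h t"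
  shows "\<exists>ts. set ts \<subseteq> T \<and> card A = (\<Sum>t\<leftarrow>ts. h t)"
proof -
  obtain zs where zs: "set zs \<subseteq> A" "card A = (\<Sum>z\<leftarrow>zs. cycle_length g z)"
    using card_eq_sum_cycle_lengths[OF assms(1,2)] by blast
  obtain \<tau> where \<tau>: "\<And>z. z \<in> A \<Longrightarrow> \<tau> z \<in> T \<and> cycle_length g z = h (\<tau> z)"
    using assms(3) by metis
  have "(\<Sum>z\<leftarrow>zs. cycle_length g z) = (\<Sum>t\<leftarrow>map \<tau> zs. h t)"
    using zs(1) \<tau> by (auto simp: comp_def intro!: arg_cong[where f = sum_list] map_cong)
  then show ?thesis using zs \<tau> by (intro exI[of _ "map \<tau> zs"]) auto
qed

locale moufang =
  fixes Q :: "'a set" and mult :: "'a \<Rightarrow> 'a \<Rightarrow> 'a" (infixl "\<cdot>" 70) and e :: 'a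
  assumes moufang_loop: "moufang_loop Q mult e"
begin

abbreviation loop_inverse :: "'a \<Rightarrow> 'a" ("_\<^sup>-\<^sup>1" [1000] 999) where
  "a\<^sup>-\<^sup>1 \<equiv> loop_inv Q mult e a"

lemma unit_closed: "e \<in> Q"
  using moufang_loop by (simp add: moufang_loop_def loop_def)

lemma mult_closed: "a \<in> Q \<Longrightarrow> b \<in> Q \<Longrightarrow> a \<cdot> b \<in> Q"
  using moufang_loop by (simp add: moufang_loop_def loop_def)

lemma left_unit: "a \<in> Q \<Longrightarrow> e \<cdot> a = a"
  using moufang_loop by (simp add: moufang_loop_def loop_def)

lemma right_unit: "a \<in> Q \<Longrightarrow> a \<cdot> e = a"
  using moufang_loop by (simp add: moufang_loop_def loop_def)

lemma moufang_identity:
  "a \<in> Q \<Longrightarrow> b \<in> Q \<Longrightarrow> c \<in> Q \<Longrightarrow> ((a \<cdot> b) \<cdot> a) \<cdot> c = a \<cdot> (b \<cdot> (a \<cdot> c))"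
  using moufang_loop by (simp add: moufang_loop_def)

lemma left_division: "a \<in> Q \<Longrightarrow> b \<in> Q \<Longrightarrow> \<exists>!c. c \<in> Q \<and> a \<cdot> c = b"
  using moufang_loop by (simp add: moufang_loop_def loop_def)

lemma right_division: "a \<in> Q \<Longrightarrow> b \<in> Q \<Longrightarrow> \<exists>!c. c \<in> Q \<and> c \<cdot> a = b"
  using moufang_loop by (simp add: moufang_loop_def loop_def)

lemma left_cancel:
  assumes "a \<in> Q" "b \<in> Q" "c \<in> Q" "a \<cdot> b = a \<cdot> c" shows "b = c"
  using left_division[OF assms(1) mult_closed[OF assms(1,2)]] assms(2-4) by (auto elim: ex1E)

lemma right_cancel:
  assumes "a \<in> Q" "b \<in> Q" "c \<in> Q" "b \<cdot> a = c \<cdot> a" shows "b = c"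
  using right_division[OF assms(1) mult_closed[OF assms(2,1)]] assms(2-4) by (auto elim: ex1E)

lemma inj_on_left_mult: "a \<in> Q \<Longrightarrow> A \<subseteq> Q \<Longrightarrow> inj_on (mult a) A"
  unfolding inj_on_def using left_cancel by blast

lemma flexible: "a \<in> Q \<Longrightarrow> b \<in> Q \<Longrightarrow> (a \<cdot> b) \<cdot> a = a \<cdot> (b \<cdot> a)"
  using moufang_identity[OF _ _ unit_closed] by (simp add: right_unit mult_closed)

lemma two_sided_inverse_exists:
  assumes a: "a \<in> Q"
  shows "\<exists>b\<in>Q. a \<cdot> b = e \<and> b \<cdot> a = e"
proof -
  obtain b where b: "b \<in> Q" "a \<cdot> b = e"
    using left_division[OF a unit_closed] by blast
  have "a \<cdot> e = a \<cdot> (b \<cdot> a)"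
    using moufang_identity[OF a b(1) unit_closed] by (simp add: a b left_unit right_unit)
  then have "b \<cdot> a = e" using left_cancel[OF a unit_closed mult_closed[OF b(1) a]] by simp
  then show ?thesis using b by blast
qed

lemma
  assumes a: "a \<in> Q"
  shows inverse_closed: "a\<^sup>-\<^sup>1 \<in> Q"
    and right_inverse: "a \<cdot> a\<^sup>-\<^sup>1 = e"
    and left_inverse: "a\<^sup>-\<^sup>1 \<cdot> a = e"
proof -
  obtain b where b: "b \<in> Q" "a \<cdot> b = e" "b \<cdot> a = e"
    using two_sided_inverse_exists[OF a] by blast
  have "a\<^sup>-\<^sup>1 = b"
    unfolding loop_inv_def
  proof (rule the_equality)
    show "b \<in> Q \<and> a \<cdot> b = e \<and> b \<cdot> a = e" using b by blast
    show "c = b" if "c \<in> Q \<and> a \<cdot> c = e \<and> c \<cdot> a = e" for c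
      using left_cancel[OF a, of c b] that b by simp
  qed
  then show "a\<^sup>-\<^sup>1 \<in> Q" "a \<cdot> a\<^sup>-\<^sup>1 = e" "a\<^sup>-\<^sup>1 \<cdot> a = e" using b by simp_all
qed

lemma inverse_unique: "a \<in> Q \<Longrightarrow> b \<in> Q \<Longrightarrow> a \<cdot> b = e \<Longrightarrow> a\<^sup>-\<^sup>1 = b"
  using left_cancel[of a "a\<^sup>-\<^sup>1" b] inverse_closed right_inverse by simp

lemma inverse_inverse: "a \<in> Q \<Longrightarrow> (a\<^sup>-\<^sup>1)\<^sup>-\<^sup>1 = a"
  using inverse_unique[of "a\<^sup>-\<^sup>1" a] inverse_closed left_inverse by simp

lemma left_inverse_property:
  assumes "a \<in> Q" "b \<in> Q" shows "a\<^sup>-\<^sup>1 \<cdot> (a \<cdot> b) = b"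
proof -
  have "a \<cdot> b = a \<cdot> (a\<^sup>-\<^sup>1 \<cdot> (a \<cdot> b))"
    using moufang_identity[OF assms(1) inverse_closed[OF assms(1)] assms(2)]
    by (simp add: assms right_inverse left_unit)
  then show ?thesis
    using left_cancel[OF assms(1)] assms inverse_closed mult_closed by metis
qed

lemma left_inverse_property': "a \<in> Q \<Longrightarrow> b \<in> Q \<Longrightarrow> a \<cdot> (a\<^sup>-\<^sup>1 \<cdot> b) = b"
  using left_inverse_property[of "a\<^sup>-\<^sup>1" b] inverse_closed inverse_inverse by simp

lemma right_inverse_property:
  assumes a: "a \<in> Q" and b: "b \<in> Q" shows "(a \<cdot> b) \<cdot> b\<^sup>-\<^sup>1 = a"
proof -
  define c where "c = b\<^sup>-\<^sup>1 \<cdot> a"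
  have c: "c \<in> Q" "b \<cdot> c = a"
    unfolding c_def using a b inverse_closed mult_closed left_inverse_property' by auto
  show ?thesis
    using moufang_identity[OF b c(1) inverse_closed[OF b]] c a b by (simp add: right_inverse right_unit)
qed

lemma right_inverse_property': "a \<in> Q \<Longrightarrow> b \<in> Q \<Longrightarrow> (a \<cdot> b\<^sup>-\<^sup>1) \<cdot> b = a"
  using right_inverse_property[of a "b\<^sup>-\<^sup>1"] inverse_closed inverse_inverse by simp

lemma inverse_mult:
  assumes a: "a \<in> Q" and b: "b \<in> Q" shows "(a \<cdot> b)\<^sup>-\<^sup>1 = b\<^sup>-\<^sup>1 \<cdot> a\<^sup>-\<^sup>1"
proof -
  define w where "w = (a \<cdot> b)\<^sup>-\<^sup>1"
  have w: "w \<in> Q" "w\<^sup>-\<^sup>1 = a \<cdot> b"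
    unfolding w_def using a b mult_closed inverse_closed inverse_inverse by auto
  have "w \<cdot> a = w \<cdot> (w\<^sup>-\<^sup>1 \<cdot> b\<^sup>-\<^sup>1)"
    using right_inverse_property[OF a b] w(2) by simp
  also have "\<dots> = b\<^sup>-\<^sup>1" using left_inverse_property'[OF w(1) inverse_closed[OF b]] .
  finally have "b\<^sup>-\<^sup>1 \<cdot> a\<^sup>-\<^sup>1 = (w \<cdot> a) \<cdot> a\<^sup>-\<^sup>1" by simp
  then show ?thesis using right_inverse_property[OF w(1) a] w_def by simp
qed

lemma right_bol:
  assumes "a \<in> Q" "b \<in> Q" "c \<in> Q"
  shows "((a \<cdot> b) \<cdot> c) \<cdot> b = a \<cdot> ((b \<cdot> c) \<cdot> b)"
proof -
  have "(((a \<cdot> b) \<cdot> c) \<cdot> b)\<^sup>-\<^sup>1 = b\<^sup>-\<^sup>1 \<cdot> (c\<^sup>-\<^sup>1 \<cdot> (b\<^sup>-\<^sup>1 \<cdot> a\<^sup>-\<^sup>1))"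
    using assms by (simp add: inverse_mult mult_closed)
  also have "\<dots> = ((b\<^sup>-\<^sup>1 \<cdot> c\<^sup>-\<^sup>1) \<cdot> b\<^sup>-\<^sup>1) \<cdot> a\<^sup>-\<^sup>1"
    using assms by (simp add: moufang_identity inverse_closed)
  also have "\<dots> = (a \<cdot> ((b \<cdot> c) \<cdot> b))\<^sup>-\<^sup>1"
    using assms by (simp add: inverse_mult mult_closed flexible inverse_closed)
  finally show ?thesis
    using assms inverse_inverse mult_closed by metis
qed

lemma loop_pow_closed: "u \<in> Q \<Longrightarrow> loop_pow mult e u n \<in> Q"
  by (induction n) (simp_all add: unit_closed mult_closed)

lemma loop_pow_mult_self:
  assumes u: "u \<in> Q" shows "loop_pow mult e u n \<cdot> u = loop_pow mult e u (Suc n)"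
proof (induction n)
  case 0
  then show ?case by (simp add: u left_unit right_unit)
next
  case (Suc n)
  then show ?case by (simp add: u flexible loop_pow_closed)
qed

lemma loop_pow_mult_eq_funpow:
  "u \<in> Q \<Longrightarrow> a \<in> Q \<Longrightarrow> loop_pow mult e u n \<cdot> a = (mult u ^^ n) a"
proof (induction n arbitrary: a rule: induct_nat_012)
  case 0
  then show ?case by (simp add: left_unit)
next
  case 1
  then show ?case by (simp add: right_unit)
next
  case (ge2 n)
  have "loop_pow mult e u (Suc (Suc n)) = u \<cdot> (loop_pow mult e u n \<cdot> u)"
    using loop_pow_mult_self[OF ge2.prems(1)] by simp
  also have "\<dots> = (u \<cdot> loop_pow mult e u n) \<cdot> u"
    using ge2.prems by (simp add: flexible loop_pow_closed)
  finally have "loop_pow mult e u (Suc (Suc n)) = (u \<cdot> loop_pow mult e u n) \<cdot> u" .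
  then have "loop_pow mult e u (Suc (Suc n)) \<cdot> a = u \<cdot> (loop_pow mult e u n \<cdot> (u \<cdot> a))"
    using ge2.prems by (simp add: moufang_identity loop_pow_closed)
  also have "\<dots> = (mult u ^^ Suc (Suc n)) a"
    using ge2.prems ge2.IH(1)[of "u \<cdot> a"] by (simp add: mult_closed funpow_swap1)
  finally show ?case .
qed

lemma cycle_length_left_mult: "u \<in> Q \<Longrightarrow> a \<in> Q \<Longrightarrow> cycle_length (mult u) a = loop_order mult e u"
proof -
  assume u: "u \<in> Q" and a: "a \<in> Q"
  have "(mult u ^^ n) a = a \<longleftrightarrow> loop_pow mult e u n = e" for n
    using loop_pow_mult_eq_funpow[OF u a, of n] right_cancel[OF a loop_pow_closed[OF u] unit_closed]
    by (auto simp: left_unit a)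
  then show ?thesis unfolding cycle_length_def loop_order_def by simp
qed

lemma
  assumes "subloop S Q mult e"
  shows subloop_subset: "S \<subseteq> Q"
    and subloop_unit: "e \<in> S"
    and subloop_mult_closed: "a \<in> S \<Longrightarrow> b \<in> S \<Longrightarrow> a \<cdot> b \<in> S"
  using assms by (simp_all add: subloop_def loop_def)

lemma subloop_inverse_closed:
  assumes S: "subloop S Q mult e" and a: "a \<in> S"
  shows "a\<^sup>-\<^sup>1 \<in> S"
proof -
  have "\<exists>!b. b \<in> S \<and> a \<cdot> b = e"
    using S a subloop_unit[OF S] by (simp add: subloop_def loop_def)
  then obtain b where b: "b \<in> S" "a \<cdot> b = e" by blast
  then have "a\<^sup>-\<^sup>1 = b" using inverse_unique[OF _ _ b(2)] a subloop_subset[OF S] by blast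
  then show ?thesis using b(1) by simp
qed

lemma fxy_mult:
  assumes "S \<subseteq> Q" and "x \<in> Q" and "a \<in> S"
  shows "fxy mult S x y (x \<cdot> a) = y \<cdot> a"
proof -
  have "(THE b. b \<in> S \<and> x \<cdot> b = x \<cdot> a) = a"
    using assms left_cancel[of x _ a] by (intro the_equality) auto
  then show ?thesis unfolding fxy_def by simp
qed

lemma mult_eq_imp_shift:
  assumes x: "x \<in> Q" and y: "y \<in> Q" and a: "a \<in> Q" and b: "b \<in> Q" and eq: "x \<cdot> a = y \<cdot> b"
  shows "y \<cdot> a = x \<cdot> ((a \<cdot> b\<^sup>-\<^sup>1) \<cdot> a)"
proof -
  have "y \<cdot> a = ((y \<cdot> b) \<cdot> b\<^sup>-\<^sup>1) \<cdot> a" using y b by (simp add: right_inverse_property)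
  also have "\<dots> = ((x \<cdot> a) \<cdot> b\<^sup>-\<^sup>1) \<cdot> a" by (simp only: eq)
  also have "\<dots> = x \<cdot> ((a \<cdot> b\<^sup>-\<^sup>1) \<cdot> a)" using right_bol[OF x a inverse_closed[OF b]] .
  finally show ?thesis .
qed

lemma bij_betw_fxy:
  assumes S: "subloop S Q mult e" and "finite Q" and x: "x \<in> Q" and y: "y \<in> Q"
  shows "bij_betw (fxy mult S x y) (lcoset mult x S \<inter> lcoset mult y S)
           (lcoset mult x S \<inter> lcoset mult y S)"
proof -
  let ?A = "lcoset mult x S \<inter> lcoset mult y S" and ?f = "fxy mult S x y"
  have SQ: "S \<subseteq> Q" using subloop_subset[OF S] .
  have "?f ` ?A \<subseteq> ?A"
  proof
    fix w assume "w \<in> ?f ` ?A"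
    then obtain a b where ab: "a \<in> S" "b \<in> S" "x \<cdot> a = y \<cdot> b" "w = ?f (x \<cdot> a)"
      unfolding lcoset_def by auto
    have "w = y \<cdot> a" using fxy_mult[OF SQ x ab(1)] ab(4) by simp
    also have "\<dots> = x \<cdot> ((a \<cdot> b\<^sup>-\<^sup>1) \<cdot> a)"
      using mult_eq_imp_shift[OF x y _ _ ab(3)] ab SQ by auto
    finally show "w \<in> ?A"
      using \<open>w = y \<cdot> a\<close> ab(1,2) S subloop_mult_closed subloop_inverse_closed
      unfolding lcoset_def by blast
  qed
  moreover have "inj_on ?f ?A"
  proof
    fix z1 z2 assume "z1 \<in> ?A" "z2 \<in> ?A" and eq: "?f z1 = ?f z2"
    then obtain a1 a2 where a: "a1 \<in> S" "a2 \<in> S" "z1 = x \<cdot> a1" "z2 = x \<cdot> a2"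
      unfolding lcoset_def by auto
    then have "y \<cdot> a1 = y \<cdot> a2" using eq fxy_mult[OF SQ x] by simp
    then show "z1 = z2" using left_cancel[OF y] a SQ by auto
  qed
  moreover have "finite ?A"
    using finite_subset[OF SQ \<open>finite Q\<close>] by (simp add: lcoset_def)
  ultimately show ?thesis unfolding bij_betw_def using endo_inj_surj by blast
qed

lemma funpow_fxy:
  assumes S: "subloop S Q mult e" and x: "x \<in> Q" and y: "y \<in> Q" and u: "u \<in> S"
    and "a \<in> S" and "x \<cdot> (u \<cdot> a) = y \<cdot> a"
  shows "(fxy mult S x y ^^ n) (x \<cdot> a) = x \<cdot> ((mult u ^^ n) a)"
  using assms(5,6)
proof (induction n arbitrary: a)
  case 0
  then show ?case by simp
next
  case (Suc n)
  have SQ: "S \<subseteq> Q" using subloop_subset[OF S] .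
  have ua: "u \<cdot> a \<in> S" using subloop_mult_closed[OF S u Suc.prems(1)] .
  have "y \<cdot> (u \<cdot> a) = x \<cdot> (((u \<cdot> a) \<cdot> a\<^sup>-\<^sup>1) \<cdot> (u \<cdot> a))"
    using mult_eq_imp_shift[OF x y _ _ Suc.prems(2)] ua Suc.prems(1) SQ by auto
  also have "(u \<cdot> a) \<cdot> a\<^sup>-\<^sup>1 = u"
    using right_inverse_property u Suc.prems(1) SQ by auto
  finally have "x \<cdot> (u \<cdot> (u \<cdot> a)) = y \<cdot> (u \<cdot> a)" by simp
  have "(fxy mult S x y ^^ Suc n) (x \<cdot> a) = (fxy mult S x y ^^ n) (fxy mult S x y (x \<cdot> a))"
    by (simp only: funpow_Suc_right comp_apply)
  also have "fxy mult S x y (x \<cdot> a) = x \<cdot> (u \<cdot> a)"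
    using fxy_mult[OF SQ x Suc.prems(1)] Suc.prems(2) by simp
  also have "(fxy mult S x y ^^ n) (x \<cdot> (u \<cdot> a)) = x \<cdot> ((mult u ^^ n) (u \<cdot> a))"
    using Suc.IH[OF ua \<open>x \<cdot> (u \<cdot> (u \<cdot> a)) = y \<cdot> (u \<cdot> a)\<close>] .
  also have "(mult u ^^ n) (u \<cdot> a) = (mult u ^^ Suc n) a"
    by (simp only: funpow_Suc_right comp_apply)
  finally show ?case .
qed

lemma cycle_length_fxy:
  assumes S: "subloop S Q mult e" and x: "x \<in> Q" and y: "y \<in> Q"
    and s: "s \<in> S" and r: "r \<in> S" and eq: "x \<cdot> s = y \<cdot> r"
  shows "cycle_length (fxy mult S x y) (x \<cdot> s) = loop_order mult e (s \<cdot> r\<^sup>-\<^sup>1)"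
proof -
  define u where "u = s \<cdot> r\<^sup>-\<^sup>1"
  have SQ: "S \<subseteq> Q" using subloop_subset[OF S] .
  have uS: "u \<in> S" unfolding u_def using S s r subloop_mult_closed subloop_inverse_closed by blast
  have sQ: "s \<in> Q" and rQ: "r \<in> Q" and uQ: "u \<in> Q" using s r uS SQ by auto
  have "y \<cdot> s = x \<cdot> (u \<cdot> s)"
    using mult_eq_imp_shift[OF x y sQ rQ eq] unfolding u_def .
  then have orbit: "(fxy mult S x y ^^ n) (x \<cdot> s) = x \<cdot> ((mult u ^^ n) s)" for n
    using funpow_fxy[OF S x y uS s] by simp
  have "(mult u ^^ n) s \<in> Q" for n
    using loop_pow_mult_eq_funpow[OF uQ sQ] mult_closed[OF loop_pow_closed[OF uQ] sQ] by metis
  then have "(fxy mult S x y ^^ n) (x \<cdot> s) = x \<cdot> s \<longleftrightarrow> (mult u ^^ n) s = s" for n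
    using left_cancel[OF x _ sQ] orbit by auto
  then have "cycle_length (fxy mult S x y) (x \<cdot> s) = cycle_length (mult u) s"
    unfolding cycle_length_def by simp
  then show ?thesis using cycle_length_left_mult uS s SQ unfolding u_def by auto
qed

lemma card_subloop_eq_sum_orders:
  assumes S: "subloop S Q mult e" and "finite Q" and t: "t \<in> S" "t \<noteq> e"
  shows "\<exists>ts. set ts \<subseteq> S - {e} \<and> card S = (\<Sum>t\<leftarrow>ts. loop_order mult e t)"
proof (rule card_eq_sum_list_of_cycle_lengths)
  have SQ: "S \<subseteq> Q" using subloop_subset[OF S] .
  show "finite S" using \<open>finite Q\<close> SQ by (rule finite_subset[rotated])
  moreover have "inj_on (mult t) S"
    using inj_on_left_mult t(1) SQ by blast
  ultimately show "bij_betw (mult t) S S"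
    using endo_inj_surj subloop_mult_closed[OF S t(1)] by (auto simp: bij_betw_def)
  show "\<exists>u\<in>S - {e}. cycle_length (mult t) a = loop_order mult e u" if "a \<in> S" for a
    using cycle_length_left_mult t that SQ by blast
qed

lemma card_coset_inter_eq_sum_orders:
  assumes S: "subloop S Q mult e" and fin: "finite Q" and x: "x \<in> Q" and y: "y \<in> Q"
    and nontrivial: "S \<noteq> {e}"
  shows "\<exists>ts. set ts \<subseteq> S - {e} \<and>
           card (lcoset mult x S \<inter> lcoset mult y S) = (\<Sum>t\<leftarrow>ts. loop_order mult e t)"
proof -
  have SQ: "S \<subseteq> Q" using subloop_subset[OF S] .
  show ?thesis
  proof (cases "x = y")
    case True
    have "inj_on (mult x) S" using inj_on_left_mult[OF x SQ] .
    then have "card (lcoset mult x S \<inter> lcoset mult y S) = card S"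
      unfolding True lcoset_def by (simp add: card_image)
    moreover obtain t where "t \<in> S" "t \<noteq> e" using nontrivial subloop_unit[OF S] by blast
    ultimately show ?thesis using card_subloop_eq_sum_orders[OF S fin] by metis
  next
    case False
    show ?thesis
    proof (rule card_eq_sum_list_of_cycle_lengths[OF _ bij_betw_fxy[OF S fin x y]])
      show "finite (lcoset mult x S \<inter> lcoset mult y S)"
        using finite_subset[OF SQ fin] by (simp add: lcoset_def)
      fix z assume "z \<in> lcoset mult x S \<inter> lcoset mult y S"
      then obtain a b where ab: "a \<in> S" "b \<in> S" "z = x \<cdot> a" "x \<cdot> a = y \<cdot> b"
        unfolding lcoset_def by auto
      have "a \<cdot> b\<^sup>-\<^sup>1 \<noteq> e"
      proof
        assume "a \<cdot> b\<^sup>-\<^sup>1 = e"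
        then have "a = b" using right_inverse_property'[of a b] left_unit ab(1,2) SQ by auto
        then show False using right_cancel[OF _ x y] ab SQ False by auto
      qed
      moreover have "a \<cdot> b\<^sup>-\<^sup>1 \<in> S"
        using ab S subloop_mult_closed subloop_inverse_closed by blast
      ultimately show "\<exists>t\<in>S - {e}. cycle_length (fxy mult S x y) z = loop_order mult e t"
        using cycle_length_fxy[OF S x y ab(1,2,4)] ab(3) by blast
    qed
  qed
qed

end

theorem lemma6p2:
  fixes Q S :: "'a set" and mult :: "'a \<Rightarrow> 'a \<Rightarrow> 'a" and e x y s r :: 'a
  assumes "moufang_loop Q mult e"
    and "finite Q"
    and "subloop S Q mult e"
    and "x \<in> Q" and "y \<in> Q"
    and "lcoset mult x S \<inter> lcoset mult y S \<noteq> {}"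
    and "s \<in> S" and "r \<in> S"
    and "mult x s = mult y r"
  shows "bij_betw (fxy mult S x y) (lcoset mult x S \<inter> lcoset mult y S)
                                   (lcoset mult x S \<inter> lcoset mult y S)
       \<and> cycle_length (fxy mult S x y) (mult x s)
           = loop_order mult e (mult s (loop_inv Q mult e r))
       \<and> (S \<noteq> {e} \<longrightarrow>
           (\<exists>ts. set ts \<subseteq> S - {e} \<and>
              card (lcoset mult x S \<inter> lcoset mult y S) = (\<Sum>t\<leftarrow>ts. loop_order mult e t)))"
proof -
  interpret moufang Q mult e by (rule moufang.intro) fact
  show ?thesis
    using bij_betw_fxy[OF assms(3,2,4,5)] cycle_length_fxy[OF assms(3,4,5,7,8,9)]
      card_coset_inter_eq_sum_orders[OF assms(3,2,4,5)]
    by blast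
qed

end
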